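(* For every integer $m\ge 2$ and every integer $i$ with $1\le i\le m-1$, $$d_i^2(m)\bigl(d_i^2(m)-d_{i-1}(m)d_{i+1}(m)\bigr)>d_{i-1}^2(m)\bigl(d_{i+1}^2(m)-d_i(m)d_{i+2}(m)\bigr).$$
   Context: For integers $m\ge 0$ and $0\le i\le m$, the Boros–Moll numbers are $$d_i(m)=2^{-2m}\sum_{k=i}^{m}2^k\binom{2m-2k}{m-k}\binom{m+k}{k}\binom{k}{i},$$ i.e. $d_i(m)$ is the coefficient of $x^i$ in $P_m(x)=2^{-2m}\sum_{k=0}^m 2^k\binom{2m-2k}{m-k}\binom{m+k}{k}(x+1)^k$. By convention $d_i(m)=0$ for $i>m$ (consistent with the formula, since $\binom{k}{i}=0$ for $k<i$). *)

theory Defs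
  imports Complex_Main
begin

text \<open>Boros--Moll numbers d_i(m). For i > m the sum is empty and the value is 0,
matching the convention.\<close>
definition boros_moll :: "nat \<Rightarrow> nat \<Rightarrow> real" where
  "boros_moll i m = (1 / 2 ^ (2 * m)) *
     (\<Sum>k = i..m. 2 ^ k * real ((2*m - 2*k) choose (m - k)) *
        real ((m + k) choose k) * real (k choose i))"

end

theory Submission
  imports Defs
begin

text \<open>The numbers d_i(m) satisfy a three-term recurrence in i (Moll). Running it downwards
from d_{m+1}(m) = 0 gives the ratio bounds i d_i \<le> (m-i+1) d_{i-1} and
(m-i+1)(2i-1) d_{i-1} \<le> 2i^2 d_i. Eliminating d_{i-1} and d_{i+2} with the recurrence, the
inequality becomes a statement about d_i and d_{i+1} alone; the ratio bounds place
d_{i+1}/d_i at n(2i+1+s)/(2(i+1)^2) with n = m-i and 0 \<le> s \<le> 1, and after clearing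
denominators what remains is the positivity of a polynomial in i, n and s whose expansion in
i-1, n-1, s and 1-s has only nonnegative coefficients.\<close>

lemma real_Suc_mult_choose_Suc:
  "real (Suc j) * real (k choose Suc j) = (real k - real j) * real (k choose j)"
  using gbinomial_mult_1[of "real k" j] by (simp add: binomial_gbinomial algebra_simps)

lemma real_mult_choose_pred:
  assumes "1 \<le> k"
  shows "real k * real ((k - 1) choose j) = (real k - real j) * real (k choose j)"
  using gbinomial_absorb_comp[of "real k" j] assms by (simp add: binomial_gbinomial of_nat_diff)

lemma central_binomial_Suc:
  "Suc n * (2 * Suc n choose Suc n) = 2 * (2 * n + 1) * (2 * n choose n)"
proof -
  have "Suc n * (2 * Suc n choose Suc n) = 2 * (Suc n * (Suc (2 * n) choose n))"
    using Suc_times_binomial[of n "Suc (2 * n)"] by (simp del: binomial_Suc_Suc)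
  also have "Suc n * (Suc (2 * n) choose n) = Suc (2 * n) * (2 * n choose n)"
    using binomial_absorb_comp[of "Suc (2 * n)" n] by (simp add: Suc_diff_le)
  finally show ?thesis by simp
qed

definition bm_weight :: "nat \<Rightarrow> nat \<Rightarrow> real" where
  "bm_weight m k = 2 ^ k * real ((2*m - 2*k) choose (m - k)) * real ((m + k) choose k)"

lemma bm_weight_pos: "0 < bm_weight m k"
  unfolding bm_weight_def by simp

lemma bm_weight_Suc:
  assumes "k < m"
  shows "bm_weight m k * (real m - real k) * (real m + real k + 1)
       = bm_weight m (Suc k) * real (Suc k) * (2 * real m - 2 * real k - 1)"
proof -
  obtain n where m: "m = Suc (k + n)"
    using less_imp_Suc_add[OF assms] by blast
  define X Z U V where "X = real (2 * Suc n choose Suc n)" and "Z = real (2 * n choose n)"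
    and "U = real (Suc (m + k) choose Suc k)" and "V = real ((m + k) choose k)"
  have central: "real (Suc n) * X = 2 * (2 * real n + 1) * Z"
    using arg_cong[OF central_binomial_Suc[of n], of real]
    by (simp add: X_def Z_def algebra_simps del: binomial_Suc_Suc)
  have upper: "(real m + real k + 1) * V = real (Suc k) * U"
    using arg_cong[OF Suc_times_binomial[of k "m + k"], of real]
    by (simp add: U_def V_def algebra_simps del: binomial_Suc_Suc)
  have w: "bm_weight m k = 2 ^ k * X * V" "bm_weight m (Suc k) = 2 * 2 ^ k * Z * U"
    unfolding bm_weight_def X_def Z_def U_def V_def m
    by (simp_all add: algebra_simps del: binomial_Suc_Suc)
  have mk: "real m - real k = real (Suc n)" "2 * real m - 2 * real k - 1 = 2 * real n + 1"
    unfolding m by simp_all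
  have "bm_weight m k * (real m - real k) * (real m + real k + 1)
      = 2 ^ k * ((real m + real k + 1) * V) * (real (Suc n) * X)"
    unfolding w mk by (simp only: mult_ac)
  also have "\<dots> = 2 * 2 ^ k * Z * U * real (Suc k) * (2 * real n + 1)"
    unfolding central upper by (simp only: mult_ac)
  finally show ?thesis
    unfolding w mk .
qed

lemma boros_moll_eq_sum:
  "boros_moll j m = (\<Sum>k\<le>m. bm_weight m k * real (k choose j)) / 2 ^ (2 * m)"
proof -
  have "(\<Sum>k\<le>m. bm_weight m k * real (k choose j))
      = (\<Sum>k=j..m. bm_weight m k * real (k choose j))"
    by (rule sum.mono_neutral_right) (auto simp: binomial_eq_0)
  then show ?thesis
    unfolding boros_moll_def bm_weight_def by simp
qed

lemma boros_moll_nonneg: "0 \<le> boros_moll j m"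
  unfolding boros_moll_eq_sum
  by (intro divide_nonneg_pos sum_nonneg mult_nonneg_nonneg less_imp_le[OF bm_weight_pos]) auto

lemma boros_moll_pos:
  assumes "j \<le> m"
  shows "0 < boros_moll j m"
proof -
  have "0 < bm_weight m m * real (m choose j)"
    using assms bm_weight_pos by simp
  then show ?thesis
    unfolding boros_moll_eq_sum
    by (intro divide_pos_pos sum_pos2[where i = m])
      (auto intro: mult_nonneg_nonneg less_imp_le[OF bm_weight_pos])
qed

lemma boros_moll_eq_0: "m < j \<Longrightarrow> boros_moll j m = 0"
  unfolding boros_moll_def by simp

text \<open>Zeilberger certificate: the summands of the recurrence below telescope to it.\<close>
definition bm_telescope :: "nat \<Rightarrow> nat \<Rightarrow> nat \<Rightarrow> real" where
  "bm_telescope j m k = (case k of 0 \<Rightarrow> 0 | Suc k' \<Rightarrow>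
      bm_weight m k' * real (k' choose j) * (real m - real k') * (real m + real k' + 1))"

lemma bm_telescope_eq:
  assumes "k \<le> m"
  shows "bm_telescope j m k
       = bm_weight m k * real (k choose j) * (2 * real m - 2 * real k + 1) * (real k - real j)"
proof (cases k)
  case 0
  then show ?thesis
    by (cases j) (simp_all add: bm_telescope_def)
next
  case (Suc k')
  have "bm_telescope j m k
      = real (k' choose j) * (bm_weight m k' * (real m - real k') * (real m + real k' + 1))"
    by (simp add: Suc bm_telescope_def mult_ac)
  also have "\<dots> = real (k' choose j) * (bm_weight m k * real k * (2 * real m - 2 * real k' - 1))"
    using bm_weight_Suc[of k' m] assms Suc by simp
  also have "\<dots> = bm_weight m k * (2 * real m - 2 * real k' - 1) * (real k * real ((k - 1) choose j))"
    by (simp add: Suc mult_ac)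
  also have "\<dots>
      = bm_weight m k * (2 * real m - 2 * real k' - 1) * ((real k - real j) * real (k choose j))"
    using real_mult_choose_pred[of k j] Suc by simp
  finally show ?thesis
    by (simp add: Suc algebra_simps)
qed

lemma bm_telescope_diff:
  assumes "k \<le> m"
  shows "bm_weight m k * ((real j + 1) * (real j + 2) * real (k choose Suc (Suc j))
         - (2 * real m + 1) * (real j + 1) * real (k choose Suc j)
         + (real m - real j) * (real m + real j + 1) * real (k choose j))
       = bm_telescope j m (Suc k) - bm_telescope j m k"
  using real_Suc_mult_choose_Suc[of j k] real_Suc_mult_choose_Suc[of "Suc j" k]
  unfolding bm_telescope_eq[OF assms] by (simp add: bm_telescope_def) algebra

lemma boros_moll_recurrence:
  "(real j + 1) * (real j + 2) * boros_moll (j + 2) m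
     - (2 * real m + 1) * (real j + 1) * boros_moll (j + 1) m
     + (real m - real j) * (real m + real j + 1) * boros_moll j m = 0"
proof -
  define S where "S i = (\<Sum>k\<le>m. bm_weight m k * real (k choose i))" for i
  have "(real j + 1) * (real j + 2) * S (j + 2) - (2 * real m + 1) * (real j + 1) * S (j + 1)
       + (real m - real j) * (real m + real j + 1) * S j
      = (\<Sum>k\<le>m. bm_weight m k * ((real j + 1) * (real j + 2) * real (k choose Suc (Suc j))
         - (2 * real m + 1) * (real j + 1) * real (k choose Suc j)
         + (real m - real j) * (real m + real j + 1) * real (k choose j)))"
    unfolding S_def by (simp add: sum_distrib_left sum_subtractf sum.distrib algebra_simps)
  also have "\<dots> = (\<Sum>k<Suc m. bm_telescope j m (Suc k) - bm_telescope j m k)"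
    by (rule sum.cong) (auto simp: bm_telescope_diff)
  also have "\<dots> = 0"
    by (simp only: sum_lessThan_telescope) (simp add: bm_telescope_def)
  moreover have "(real j + 1) * (real j + 2) * boros_moll (j + 2) m
       - (2 * real m + 1) * (real j + 1) * boros_moll (j + 1) m
       + (real m - real j) * (real m + real j + 1) * boros_moll j m
      = ((real j + 1) * (real j + 2) * S (j + 2) - (2 * real m + 1) * (real j + 1) * S (j + 1)
       + (real m - real j) * (real m + real j + 1) * S j) / 2 ^ (2 * m)"
    unfolding boros_moll_eq_sum S_def[symmetric] by (simp add: diff_divide_distrib add_divide_distrib)
  ultimately show ?thesis
    by simp
qed

lemma boros_moll_recurrence_pred:
  assumes "1 \<le> j"
  shows "real j * (real j + 1) * boros_moll (j + 1) m - (2 * real m + 1) * real j * boros_moll j m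
     + (real m - real j + 1) * (real m + real j) * boros_moll (j - 1) m = 0"
proof -
  obtain j' where j: "j = Suc j'"
    using assms by (cases j) auto
  show ?thesis
    using boros_moll_recurrence[of j' m] unfolding j by (simp add: algebra_simps)
qed

lemma ratio_lower_bound_step:
  fixes j m x y z :: real
  assumes "1 \<le> j" "j \<le> m" "0 \<le> y"
    and rec: "j * (j + 1) * z - (2 * m + 1) * j * y + (m - j + 1) * (m + j) * x = 0"
    and bound: "(m - j) * (2 * j + 1) * y \<le> 2 * (j + 1)^2 * z"
  shows "(m - j + 1) * (2 * j - 1) * x \<le> 2 * j^2 * y"
proof -
  define q where "q = j * (2*m*j + 3*m + 2*j^2 + 3*j + 2) * y - 2 * (j + 1) * ((m - j + 1) * (m + j) * x)"
  have "q = j * (2 * (j + 1)^2 * z - (m - j) * (2 * j + 1) * y)"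
    unfolding q_def using rec by algebra
  then have "0 \<le> q"
    using bound assms by simp
  moreover have "2 * (j + 1) * (m + j) * (2 * j^2 * y - (m - j + 1) * (2 * j - 1) * x)
      = (2 * j - 1) * q + j * (3 * m + 2 - j) * y"
    unfolding q_def by algebra
  ultimately have "0 \<le> 2 * (j + 1) * (m + j) * (2 * j^2 * y - (m - j + 1) * (2 * j - 1) * x)"
    using assms by simp
  moreover have "0 < 2 * (j + 1) * (m + j)"
    using assms by simp
  ultimately show ?thesis
    by (simp add: zero_le_mult_iff)
qed

lemma ratio_upper_bound_step:
  fixes j m x y z :: real
  assumes "1 \<le> j" "j \<le> m" "0 \<le> y"
    and rec: "j * (j + 1) * z - (2 * m + 1) * j * y + (m - j + 1) * (m + j) * x = 0"
    and bound: "(j + 1) * z \<le> (m - j) * y"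
  shows "j * y \<le> (m - j + 1) * x"
proof -
  have eq: "(m + j) * ((m - j + 1) * x - j * y) = j * (((m - j) * y - (j + 1) * z) + y)"
    using rec by algebra
  have "0 \<le> j * (((m - j) * y - (j + 1) * z) + y)"
    using assms by (intro mult_nonneg_nonneg) auto
  then have "0 \<le> (m + j) * ((m - j + 1) * x - j * y)"
    unfolding eq .
  moreover have "0 < m + j"
    using assms by simp
  ultimately show ?thesis
    by (simp add: zero_le_mult_iff)
qed

lemma boros_moll_ratio_lower:
  assumes "1 \<le> j" "j \<le> Suc m"
  shows "(real m - real j + 1) * (2 * real j - 1) * boros_moll (j - 1) m
       \<le> 2 * real j^2 * boros_moll j m"
  using assms(2,1)
proof (induction rule: inc_induct)
  case base
  then show ?case by (simp add: boros_moll_eq_0)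
next
  case (step j)
  show ?case
    by (rule ratio_lower_bound_step[where z = "boros_moll (Suc j) m"])
      (use step boros_moll_recurrence_pred[of j m] boros_moll_nonneg in \<open>auto simp: algebra_simps\<close>)
qed

lemma boros_moll_ratio_upper:
  assumes "1 \<le> j" "j \<le> Suc m"
  shows "real j * boros_moll j m \<le> (real m - real j + 1) * boros_moll (j - 1) m"
  using assms(2,1)
proof (induction rule: inc_induct)
  case base
  then show ?case by (simp add: boros_moll_eq_0)
next
  case (step j)
  show ?case
    by (rule ratio_upper_bound_step[where z = "boros_moll (Suc j) m"])
      (use step boros_moll_recurrence_pred[of j m] boros_moll_nonneg in \<open>auto simp: algebra_simps\<close>)
qed

text \<open>For (a, b, c, e) = (d_{i-1}, d_i, d_{i+1}, d_{i+2}) / d_i, the recurrence gives a = A/(K W)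
and c = Y/W, where the ratio bounds amount to 0 \<le> s \<le> 1.\<close>
definition gap_poly :: "real \<Rightarrow> real \<Rightarrow> real \<Rightarrow> real" where
  "gap_poly i n s = (let m = i + n; Y = n * (2*i + 1 + s); W = 2 * (i + 1)^2;
     K = (n + 1) * (m + i); A = (2*m + 1) * i * W - i * (i + 1) * Y in
     (i + 1) * (i + 2) * (K^2 * W^4 - K * Y * A * W^2 - Y^2 * A^2)
       + A^2 * ((2*m + 1) * (i + 1) * Y * W - n * (m + i + 1) * W^2))"

lemma gap_poly_pos:
  fixes i n s :: real
  assumes "1 \<le> i" "1 \<le> n" "0 \<le> s" "s \<le> 1"
  shows "0 < gap_poly i n s"
proof -
  define p q t where "p = i - 1" and "q = n - 1" and "t = 1 - s"
  have nonneg: "0 \<le> p" "0 \<le> q" "0 \<le> s" "0 \<le> t" and "s + t = 1"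
    using assms by (simp_all add: p_def q_def t_def)
  have "gap_poly i n s = (568808*t^4 + 557056*s^4) + (2271104*s*t^3 + 3391872*s^2*t^2 + 2246656*s^3*t + 820640*q*t^4 + 3256064*q*s*t^3 + 4825344*q*s^2*t^2 + 3168256*q*s^3*t + 778240*q*s^4 + 452592*q^2*t^4 + 1777920*q^2*s*t^3 + 2606208*q^2*s^2*t^2 + 1692672*q^2*s^3*t + 411648*q^2*s^4 + 113312*q^3*t^4 + 442112*q^3*s*t^3 + 645120*q^3*s^2*t^2 + 418816*q^3*s^3*t + 102400*q^3*s^4 + 10856*q^4*t^4 + 42368*q^4*s*t^3 + 62208*q^4*s^2*t^2 + 40960*q^4*s^3*t + 10240*q^4*s^4 + 3344900*p*t^4 + 13410848*p*s*t^3 + 20108224*p*s^2*t^2 + 13368320*p*s^3*t + 3325952*p*s^4 + 4458288*p*q*t^4 + 17765792*p*q*s*t^3 + 26426112*p*q*s^2*t^2 + 17403392*p*q*s^3*t + 4284416*p*q*s^4 + 2254904*p*q^2*t^4 + 8874400*p*q^2*s*t^3 + 13016384*p*q^2*s^2*t^2 + 8446464*p*q^2*s^3*t + 2049024*p*q^2*s^4 + 514288*p*q^3*t^4 + 2006240*p*q^3*s*t^3 + 2923136*p*q^3*s^2*t^2 + 1892352*p*q^3*s^3*t + 460800*p*q^3*s^4 + 44516*p*q^4*t^4 + 173760*p*q^4*s*t^3 + 255104*p*q^4*s^2*t^2 + 167936*p*q^4*s^3*t + 41984*p*q^4*s^4 + 8967090*p^2*t^4 + 36138880*p^2*s*t^3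 + 54459712*p^2*s^2*t^2 + 36381184*p^2*s^3*t + 9093120*p^2*s^4 + 10976584*p^2*q*t^4 + 44002880*p^2*q*s*t^3 + 65809088*p^2*q*s^2*t^2 + 43547648*p^2*q*s^3*t + 10764288*p^2*q*s^4 + 5046700*p^2*q^2*t^4 + 19918528*p^2*q^2*s*t^3 + 29259968*p^2*q^2*s^2*t^2 + 18986240*p^2*q^2*s^3*t + 4597248*p^2*q^2*s^4 + 1036104*p^2*q^3*t^4 + 4042688*p^2*q^3*s*t^3 + 5883200*p^2*q^3*s^2*t^2 + 3797760*p^2*q^3*s^3*t + 920576*p^2*q^3*s^4 + 79666*p^2*q^4*t^4 + 311232*p^2*q^4*s*t^3 + 457216*p^2*q^4*s^2*t^2 + 301056*p^2*q^4*s^3*t + 75264*p^2*q^4*s^4 + 14485503*p^3*t^4 + 58754064*p^3*s*t^3 + 89096864*p^3*s^2*t^2 + 59885312*p^3*s^3*t + 15056896*p^3*s^4 + 16166348*p^3*q*t^4 + 65340560*p^3*q*s*t^3 + 98472320*p^3*q*s^2*t^2 + 65625216*p^3*q*s^3*t + 16326656*p^3*q*s^4 + 6682506*p^3*q^2*t^4 + 26483344*p^3*q^2*s*t^3 + 39010784*p^3*q^2*s^2*t^2 + 25341568*p^3*q^2*s^3*t + 6130944*p^3*q^2*s^4 + 1216300*p^3*q^3*t^4 + 4748336*p^3*q^3*s*t^3 + 6903360*p^3*q^3*s^2*t^2 + 4443392*p^3*q^3*s^3*t + 1071616*p^3*q^3*s^4 + 81263*p^3*q^4*t^4 + 317984*p^3*q^4*s*t^3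 + 467776*p^3*q^4*s^2*t^2 + 308224*p^3*q^4*s^3*t + 77056*p^3*q^4*s^4 + 15696159*p^4*t^4 + 64168584*p^4*s*t^3 + 98062520*p^4*s^2*t^2 + 66412416*p^4*s^3*t + 16822272*p^4*s^4 + 15824268*p^4*q*t^4 + 64681984*p^4*q*s*t^3 + 98524464*p^4*q*s^2*t^2 + 66326400*p^4*q*s^3*t + 16659456*p^4*q*s^4 + 5798098*p^4*q^2*t^4 + 23112160*p^4*q^2*s*t^3 + 34195752*p^4*q^2*s^2*t^2 + 22275520*p^4*q^2*s^3*t + 5393536*p^4*q^2*s^4 + 917052*p^4*q^3*t^4 + 3583008*p^4*q^3*s*t^3 + 5204960*p^4*q^3*s^2*t^2 + 3340224*p^4*q^3*s^3*t + 801024*p^4*q^3*s^4 + 51671*p^4*q^4*t^4 + 202680*p^4*q^4*s*t^3 + 298800*p^4*q^4*s^2*t^2 + 197120*p^4*q^4*s^3*t + 49280*p^4*q^4*s^4 + 12010987*p^5*t^4 + 49582370*p^5*s*t^3 + 76491116*p^5*s^2*t^2 + 52282944*p^5*s^3*t + 13363200*p^5*s^4 + 10807534*p^5*q*t^4 + 44874666*p^5*q*s*t^3 + 69372464*p^5*q*s^2*t^2 + 47362976*p^5*q*s^3*t + 12057600*p^5*q*s^4 + 3444836*p^5*q^2*t^4 + 13845866*p^5*q^2*s*t^3 + 20626404*p^5*q^2*s^2*t^2 + 13507040*p^5*q^2*s^3*t + 3281600*p^5*q^2*s^4 + 460618*p^5*q^3*t^4 + 1801534*p^5*q^3*s*t^3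 + 2615240*p^5*q^3*s^2*t^2 + 1673088*p^5*q^3*s^3*t + 398720*p^5*q^3*s^4 + 20969*p^5*q^4*t^4 + 82524*p^5*q^4*s*t^3 + 122024*p^5*q^4*s^2*t^2 + 80640*p^5*q^4*s^3*t + 20160*p^5*q^4*s^4 + 6649911*p^6*t^4 + 27783184*p^6*s*t^3 + 43356984*p^6*s^2*t^2 + 29965152*p^6*s^3*t + 7741440*p^6*s^4 + 5254048*p^6*q*t^4 + 22309816*p^6*q*s*t^3 + 35208596*p^6*q*s^2*t^2 + 24507264*p^6*q*s^3*t + 6354432*p^6*q*s^4 + 1419490*p^6*q^2*t^4 + 5775312*p^6*q^2*s*t^3 + 8695224*p^6*q^2*s^2*t^2 + 5745904*p^6*q^2*s^3*t + 1406496*p^6*q^2*s^4 + 154160*p^6*q^3*t^4 + 603656*p^6*q^3*s*t^3 + 875748*p^6*q^3*s^2*t^2 + 558416*p^6*q^3*s^3*t + 132160*p^6*q^3*s^4 + 5303*p^6*q^4*t^4 + 20960*p^6*q^4*s*t^3 + 31112*p^6*q^4*s^2*t^2 + 20608*p^6*q^4*s^3*t + 5152*p^6*q^4*s^4 + 2681166*p^7*t^4 + 11370522*p^7*s*t^3 + 17993628*p^7*s^2*t^2 + 12600528*p^7*s^3*t + 3296256*p^7*s^4 + 1817522*p^7*q*t^4 + 7977194*p^7*q*s*t^3 + 12961968*p^7*q*s^2*t^2 + 9262968*p^7*q*s^3*t + 2460672*p^7*q*s^4 + 400622*p^7*q^2*t^4 + 1661130*p^7*q^2*s*t^3 + 2543524*p^7*q^2*s^2*t^2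 + 1706680*p^7*q^2*s^3*t + 423664*p^7*q^2*s^4 + 33158*p^7*q^3*t^4 + 130006*p^7*q^3*s*t^3 + 188480*p^7*q^3*s^2*t^2 + 119760*p^7*q^3*s^3*t + 28128*p^7*q^3*s^4 + 764*p^7*q^4*t^4 + 3036*p^7*q^4*s*t^3 + 4528*p^7*q^4*s^2*t^2 + 3008*p^7*q^4*s^3*t + 752*p^7*q^4*s^4 + 780252*p^8*t^4 + 3371556*p^8*s*t^3 + 5426472*p^8*s^2*t^2 + 3859296*p^8*s^3*t + 1024128*p^8*s^4 + 438232*p^8*q*t^4 + 2024692*p^8*q*s*t^3 + 3430940*p^8*q*s^2*t^2 + 2540768*p^8*q*s^3*t + 696288*p^8*q*s^4 + 74124*p^8*q^2*t^4 + 317404*p^8*q^2*s*t^3 + 500032*p^8*q^2*s^2*t^2 + 344384*p^8*q^2*s^3*t + 87632*p^8*q^2*s^4 + 4160*p^8*q^3*t^4 + 16332*p^8*q^3*s*t^3 + 23660*p^8*q^3*s^2*t^2 + 14976*p^8*q^3*s^3*t + 3488*p^8*q^3*s^4 + 48*p^8*q^4*t^4 + 192*p^8*q^4*s*t^3 + 288*p^8*q^4*s^2*t^2 + 192*p^8*q^4*s^3*t + 48*p^8*q^4*s^4 + 159552*p^9*t^4 + 706000*p^9*s*t^3 + 1159840*p^9*s^2*t^2 + 839888*p^9*s^3*t + 226496*p^9*s^4 + 70096*p^9*q*t^4 + 352776*p^9*q*s*t^3 + 636032*p^9*q*s^2*t^2 + 494120*p^9*q*s^3*t + 140768*p^9*q*s^4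 + 8120*p^9*q^2*t^4 + 37064*p^9*q^2*s*t^3 + 61576*p^9*q^2*s^2*t^2 + 44440*p^9*q^2*s^3*t + 11808*p^9*q^2*s^4 + 232*p^9*q^3*t^4 + 912*p^9*q^3*s*t^3 + 1320*p^9*q^3*s^2*t^2 + 832*p^9*q^3*s^3*t + 192*p^9*q^3*s^4 + 21712*p^10*t^4 + 99040*p^10*s*t^3 + 166800*p^10*s^2*t^2 + 123328*p^10*s^3*t + 33856*p^10*s^4 + 6688*p^10*q*t^4 + 39520*p^10*q*s*t^3 + 78336*p^10*q*s^2*t^2 + 64864*p^10*q*s^3*t + 19360*p^10*q*s^4 + 400*p^10*q^2*t^4 + 2176*p^10*q^2*s*t^3 + 4080*p^10*q^2*s^2*t^2 + 3232*p^10*q^2*s^3*t + 928*p^10*q^2*s^4 + 1760*p^11*t^4 + 8352*p^11*s*t^3 + 14496*p^11*s^2*t^2 + 10976*p^11*s^3*t + 3072*p^11*s^4 + 288*p^11*q*t^4 + 2496*p^11*q*s*t^3 + 5760*p^11*q*s^2*t^2 + 5184*p^11*q*s^3*t + 1632*p^11*q*s^4 + 32*p^11*q^2*s*t^3 + 96*p^11*q^2*s^2*t^2 + 96*p^11*q^2*s^3*t + 32*p^11*q^2*s^4 + 64*p^12*t^4 + 320*p^12*s*t^3 + 576*p^12*s^2*t^2 + 448*p^12*s^3*t + 128*p^12*s^4 + 64*p^12*q*s*t^3 + 192*p^12*q*s^2*t^2 + 192*p^12*q*s^3*t + 64*p^12*q*s^4)"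
    unfolding gap_poly_def Let_def p_def q_def t_def by algebra
  also have "0 < \<dots>"
  proof (rule add_pos_nonneg)
    show "0 < 568808*t^4 + 557056*s^4"
      using \<open>s + t = 1\<close> nonneg
      by (cases "s = 0") (auto intro: add_pos_nonneg add_nonneg_pos)
  qed (use nonneg in \<open>intro add_nonneg_nonneg mult_nonneg_nonneg zero_le_power; simp\<close>)
  finally show ?thesis .
qed

lemma gap_identity:
  fixes a b c e i n s :: real
  assumes "(n + 1) * (n + 2*i) * a = (2 * (i + n) + 1) * i * b - i * (i + 1) * c"
    and "(i + 1) * (i + 2) * e = (2 * (i + n) + 1) * (i + 1) * c - n * (2*i + n + 1) * b"
    and "2 * (i + 1)^2 * c = n * (2*i + 1 + s) * b"
  shows "((n + 1) * (n + 2*i))^2 * (i + 1) * (i + 2) * (2 * (i + 1)^2)^4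
           * (b^2 * (b^2 - a*c) - a^2 * (c^2 - b*e))
         = b^4 * gap_poly i n s"
  using assms unfolding gap_poly_def Let_def by algebra

lemma lc_gap_inequality:
  fixes i m a b c e :: real
  assumes "1 \<le> i" "1 \<le> m - i" "0 < b"
    and rec_a: "i * (i + 1) * c - (2*m + 1) * i * b + (m - i + 1) * (m + i) * a = 0"
    and rec_e: "(i + 1) * (i + 2) * e - (2*m + 1) * (i + 1) * c + (m - i) * (m + i + 1) * b = 0"
    and lower: "(m - i) * (2*i + 1) * b \<le> 2 * (i + 1)^2 * c"
    and upper: "(i + 1) * c \<le> (m - i) * b"
  shows "b^2 * (b^2 - a*c) - a^2 * (c^2 - b*e) > 0"
proof -
  define n where "n = m - i"
  define s where "s = (2 * (i + 1)^2 * c - n * (2*i + 1) * b) / (n * b)"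
  have nb: "0 < n * b"
    using assms by (simp add: n_def)
  have "s * (n * b) = 2 * (i + 1)^2 * c - n * (2*i + 1) * b"
    using nb unfolding s_def by (simp del: mult_eq_0_iff)
  then have c: "2 * (i + 1)^2 * c = n * (2*i + 1 + s) * b"
    by algebra
  have "0 \<le> s"
    using lower nb by (simp add: s_def n_def)
  moreover have "2 * (i + 1) * ((i + 1) * c) \<le> 2 * (i + 1) * (n * b)"
    using upper assms by (intro mult_left_mono) (auto simp: n_def)
  then have "s \<le> 1"
    using nb by (simp add: s_def power2_eq_square algebra_simps)
  ultimately have "0 < b^4 * gap_poly i n s"
    using gap_poly_pos assms by (simp add: n_def)
  also have "b^4 * gap_poly i n s = ((n + 1) * (n + 2*i))^2 * (i + 1) * (i + 2) * (2 * (i + 1)^2)^4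
           * (b^2 * (b^2 - a*c) - a^2 * (c^2 - b*e))"
    using rec_a rec_e c by (intro gap_identity[symmetric]) (simp_all add: n_def algebra_simps)
  finally have "0 < ((n + 1) * (n + 2*i))^2 * (i + 1) * (i + 2) * (2 * (i + 1)^2)^4
           * (b^2 * (b^2 - a*c) - a^2 * (c^2 - b*e))" .
  then show ?thesis
    by (rule zero_less_mult_pos) (use assms in \<open>simp add: n_def\<close>)
qed

theorem theorem1p1:
  fixes m i :: nat
  assumes "m \<ge> 2" and "1 \<le> i" and "i \<le> m - 1"
  shows "(boros_moll i m)^2 * ((boros_moll i m)^2 - boros_moll (i-1) m * boros_moll (i+1) m)
       > (boros_moll (i-1) m)^2 * ((boros_moll (i+1) m)^2 - boros_moll i m * boros_moll (i+2) m)"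
proof -
  have "i < m" "Suc i \<le> Suc m"
    using assms by simp_all
  have "boros_moll i m ^ 2 * (boros_moll i m ^ 2 - boros_moll (i-1) m * boros_moll (i+1) m)
      - boros_moll (i-1) m ^ 2 * (boros_moll (i+1) m ^ 2 - boros_moll i m * boros_moll (i+2) m) > 0"
  proof (rule lc_gap_inequality)
    show "0 < boros_moll i m"
      using \<open>i < m\<close> by (simp add: boros_moll_pos)
    show "real i * (real i + 1) * boros_moll (i + 1) m - (2 * real m + 1) * real i * boros_moll i m
        + (real m - real i + 1) * (real m + real i) * boros_moll (i - 1) m = 0"
      using boros_moll_recurrence_pred[of i m] assms by simp
    show "(real i + 1) * (real i + 2) * boros_moll (i + 2) m
        - (2 * real m + 1) * (real i + 1) * boros_moll (i + 1) m
        + (real m - real i) * (real m + real i + 1) * boros_moll i m = 0"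
      by (rule boros_moll_recurrence)
    show "(real m - real i) * (2 * real i + 1) * boros_moll i m
        \<le> 2 * (real i + 1)^2 * boros_moll (i + 1) m"
      using boros_moll_ratio_lower[of "Suc i" m] \<open>Suc i \<le> Suc m\<close> by (simp add: algebra_simps)
    show "(real i + 1) * boros_moll (i + 1) m \<le> (real m - real i) * boros_moll i m"
      using boros_moll_ratio_upper[of "Suc i" m] \<open>Suc i \<le> Suc m\<close> by (simp add: algebra_simps)
  qed (use assms \<open>i < m\<close> in auto)
  then show ?thesis
    by simp
qed

end
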